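(* Every chain complex $\mathcal{A}$ over $\mathbb{F}_2$ has a lift to some chain complex $\tilde{\mathcal{A}}$ over $\mathbb{Z}$. Further, the lift can be chosen so that $\tilde{\mathcal{A}}$ has no torsion in its homology or cohomology and has the same Betti numbers as $\mathcal{A}$, i.e. $H_j(\tilde{\mathcal{A}})$ and $H^j(\tilde{\mathcal{A}})$ are both isomorphic to $\mathbb{Z}^{b_j(\mathcal{A})}$, where $b_j(\mathcal{A})$ are the $\mathbb{F}_2$ Betti numbers of $\mathcal{A}$.
   Context: A chain complex $\mathcal{A}$ over $\mathbb{F}_2$ consists of finite-dimensional vector spaces $\mathcal{A}_j$ with preferred bases and boundary maps $\partial_j:\mathcal{A}_j\to\mathcal{A}_{j-1}$ (matrices with entries in $\{0,1\}$) with $\partial_{j}\partial_{j+1}=0$. A lift is a chain complex over $\mathbb{Z}$ on free modules with the same bases, given by integer matrices $\tilde\partial_j$ of the same sizes with each entry congruent mod $2$ to the corresponding entry of $\partial_j$, satisfying $\tilde\partial_j\tilde\partial_{j+1}=0$ over $\mathbb{Z}$. *)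

theory Defs
  imports "HOL-Algebra.Coset" "HOL-Library.Z2" "HOL-Library.Function_Algebras" "HOL.Vector_Spaces"
begin

text \<open>Column vectors of length n over a ring: functions nat => 'a vanishing from index n on
  (coordinates w.r.t. the preferred basis e_0, ..., e_(n-1)).\<close>
definition fvec :: "nat \<Rightarrow> (nat \<Rightarrow> 'a::zero) set" where
  "fvec n = {v. \<forall>i\<ge>n. v i = 0}"

definition matvec :: "nat \<Rightarrow> nat \<Rightarrow> (nat \<Rightarrow> nat \<Rightarrow> 'a::comm_ring_1) \<Rightarrow> (nat \<Rightarrow> 'a) \<Rightarrow> (nat \<Rightarrow> 'a)" where
  "matvec m n M v = (\<lambda>i. if i < m then (\<Sum>l<n. M i l * v l) else 0)"

definition transp :: "(nat \<Rightarrow> nat \<Rightarrow> 'a) \<Rightarrow> (nat \<Rightarrow> nat \<Rightarrow> 'a)" where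
  "transp M = (\<lambda>i k. M k i)"

text \<open>Chain complex over a commutative ring with preferred bases: A_j has dimension d j (j :: int),
  boundary map \<partial>_j : A_j -> A_(j-1) is the (d (j-1)) x (d j) matrix D j, and \<partial>_j \<partial>_(j+1) = 0.\<close>
definition is_chain_complex :: "(int \<Rightarrow> nat) \<Rightarrow> (int \<Rightarrow> nat \<Rightarrow> nat \<Rightarrow> 'a::comm_ring_1) \<Rightarrow> bool" where
  "is_chain_complex d D \<longleftrightarrow>
     (\<forall>j. \<forall>i < d (j - 1). \<forall>k < d (j + 1). (\<Sum>l < d j. D j i l * D (j + 1) l k) = 0)"

definition cycles :: "nat \<Rightarrow> nat \<Rightarrow> (nat \<Rightarrow> nat \<Rightarrow> 'a::comm_ring_1) \<Rightarrow> (nat \<Rightarrow> 'a) set" where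
  "cycles m n M = {v \<in> fvec n. matvec m n M v = (\<lambda>_. 0)}"

definition boundaries :: "nat \<Rightarrow> nat \<Rightarrow> (nat \<Rightarrow> nat \<Rightarrow> 'a::comm_ring_1) \<Rightarrow> (nat \<Rightarrow> 'a) set" where
  "boundaries n k N = matvec n k N ` fvec k"

definition Zgrp :: "nat \<Rightarrow> (nat \<Rightarrow> int) monoid" where
  "Zgrp n = \<lparr>carrier = fvec n, mult = (\<lambda>u v. (\<lambda>i. u i + v i)), one = (\<lambda>_. 0)\<rparr>"

definition int_homology :: "(int \<Rightarrow> nat) \<Rightarrow> (int \<Rightarrow> nat \<Rightarrow> nat \<Rightarrow> int) \<Rightarrow> int \<Rightarrow> (nat \<Rightarrow> int) set monoid" where
  "int_homology d L j =
     ((Zgrp (d j))\<lparr>carrier := cycles (d (j - 1)) (d j) (L j)\<rparr>)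
       Mod boundaries (d j) (d (j + 1)) (L (j + 1))"

text \<open>Integral cohomology H^j = ker \<delta>^j / im \<delta>^(j-1) of the dual cochain complex Hom(-, Z),
  where with respect to the dual bases \<delta>^j : C^j -> C^(j+1) is the transpose of \<partial>_(j+1).\<close>
definition int_cohomology :: "(int \<Rightarrow> nat) \<Rightarrow> (int \<Rightarrow> nat \<Rightarrow> nat \<Rightarrow> int) \<Rightarrow> int \<Rightarrow> (nat \<Rightarrow> int) set monoid" where
  "int_cohomology d L j =
     ((Zgrp (d j))\<lparr>carrier := cycles (d (j + 1)) (d j) (transp (L (j + 1)))\<rparr>)
       Mod boundaries (d j) (d (j - 1)) (transp (L j))"

definition betti_F2 :: "(int \<Rightarrow> nat) \<Rightarrow> (int \<Rightarrow> nat \<Rightarrow> nat \<Rightarrow> bit) \<Rightarrow> int \<Rightarrow> nat" where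
  "betti_F2 d D j =
     vector_space.dim (\<lambda>(c::bit) v. (\<lambda>i. c * v i)) (cycles (d (j - 1)) (d j) (D j))
     - vector_space.dim (\<lambda>(c::bit) v. (\<lambda>i. c * v i)) (boundaries (d j) (d (j + 1)) (D (j + 1)))"

definition is_lift :: "(int \<Rightarrow> nat) \<Rightarrow> (int \<Rightarrow> nat \<Rightarrow> nat \<Rightarrow> bit) \<Rightarrow> (int \<Rightarrow> nat \<Rightarrow> nat \<Rightarrow> int) \<Rightarrow> bool" where
  "is_lift d D L \<longleftrightarrow>
     (\<forall>j. \<forall>i < d (j - 1). \<forall>k < d j. of_int (L j i k) = D j i k) \<and> is_chain_complex d L"

end

(*
  Over F_2, choose in each degree j a basis of the boundaries B_j (r_j vectors), extend it by h_j
  vectors to a basis of the cycles Z_j, and add preimages under the boundary map of the chosen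
  basis of B_(j-1). This is a basis of A_j in which the boundary becomes the standard boundary S_j,
  mapping the last r_(j-1) basis vectors identically onto the first r_(j-1) basis vectors of degree
  j-1; clearly h_j = b_j. So D_j = P_(j-1) S_j P_j^-1 for invertible matrices P_j over F_2.

  An invertible matrix over F_2 is a product of row swaps and transvections, each of which lifts to
  an invertible integer matrix; hence P_j lifts to some U_j in GL(Z). The integer complex
  L_j = U_(j-1) S_j U_j^-1 reduces to D_j mod 2 and is isomorphic to the integral standard complex,
  whose homology and cohomology in degree j are both Z^(h_j).
*)

theory Submission
  imports Defs
begin

section \<open>Matrices as functions\<close>

text \<open>Matrices are functions \<open>nat \<Rightarrow> nat \<Rightarrow> 'a\<close> whose size is carried separately; \<open>p\<close> is the
  inner dimension of a product. Entries outside the block of interest are junk, so statements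
  about matrices are restricted to that block.\<close>

definition mat_mult :: "nat \<Rightarrow> (nat \<Rightarrow> nat \<Rightarrow> 'a::comm_ring_1) \<Rightarrow> (nat \<Rightarrow> nat \<Rightarrow> 'a) \<Rightarrow> nat \<Rightarrow> nat \<Rightarrow> 'a"
  where "mat_mult p A B = (\<lambda>i k. \<Sum>l<p. A i l * B l k)"

definition mat_id :: "nat \<Rightarrow> nat \<Rightarrow> 'a::comm_ring_1"
  where "mat_id = (\<lambda>i k. if i = k then 1 else 0)"

definition mat_inverses :: "nat \<Rightarrow> (nat \<Rightarrow> nat \<Rightarrow> 'a::comm_ring_1) \<Rightarrow> (nat \<Rightarrow> nat \<Rightarrow> 'a) \<Rightarrow> bool"
  where "mat_inverses n A B \<longleftrightarrow>
    (\<forall>i<n. \<forall>k<n. mat_mult n A B i k = mat_id i k \<and> mat_mult n B A i k = mat_id i k)"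

definition mat_injective :: "nat \<Rightarrow> (nat \<Rightarrow> nat \<Rightarrow> 'a::comm_ring_1) \<Rightarrow> bool"
  where "mat_injective n A \<longleftrightarrow> (\<forall>x\<in>fvec n. matvec n n A x = (\<lambda>_. 0) \<longrightarrow> x = (\<lambda>_. 0))"

definition mod2_mat :: "(nat \<Rightarrow> nat \<Rightarrow> int) \<Rightarrow> nat \<Rightarrow> nat \<Rightarrow> bit"
  where "mod2_mat A = (\<lambda>i k. of_int (A i k))"

lemma mat_mult_assoc: "mat_mult q (mat_mult p A B) C = mat_mult p A (mat_mult q B C)"
  unfolding mat_mult_def
  by (auto simp: fun_eq_iff sum_distrib_left sum_distrib_right mult.assoc intro: sum.swap)

lemma mat_mult_id_left:
  assumes "i < p"
  shows "mat_mult p mat_id A i k = A i k"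
proof -
  have "mat_mult p mat_id A i k = (\<Sum>l<p. if i = l then A l k else 0)"
    unfolding mat_mult_def mat_id_def by (rule sum.cong) auto
  then show ?thesis using assms by (simp add: sum.delta)
qed

lemma mat_mult_id_right:
  assumes "k < p"
  shows "mat_mult p A mat_id i k = A i k"
proof -
  have "mat_mult p A mat_id i k = (\<Sum>l<p. if l = k then A i l else 0)"
    unfolding mat_mult_def mat_id_def by (rule sum.cong) auto
  then show ?thesis using assms by (simp add: sum.delta')
qed

lemma mat_mult_cong:
  "(\<And>l. l < p \<Longrightarrow> A i l = A' i l) \<Longrightarrow> (\<And>l. l < p \<Longrightarrow> B l k = B' l k)
    \<Longrightarrow> mat_mult p A B i k = mat_mult p A' B' i k"
  unfolding mat_mult_def by (auto intro: sum.cong)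

lemma matvec_mat_mult: "matvec m n (mat_mult p A B) v = matvec m p A (matvec p n B v)"
  unfolding matvec_def mat_mult_def
  by (auto simp: fun_eq_iff sum_distrib_left sum_distrib_right mult.assoc intro: sum.swap)

lemma matvec_in_fvec [simp]: "matvec m n A v \<in> fvec m"
  unfolding matvec_def fvec_def by auto

lemma matvec_zero [simp]: "matvec m n A (\<lambda>_. 0) = (\<lambda>_. 0)"
  unfolding matvec_def by auto

lemma matvec_add: "matvec m n A (\<lambda>i. u i + v i) = (\<lambda>i. matvec m n A u i + matvec m n A v i)"
  unfolding matvec_def by (auto simp: fun_eq_iff algebra_simps sum.distrib)

lemma matvec_uminus: "matvec m n A (\<lambda>i. - u i) = (\<lambda>i. - matvec m n A u i)"
  unfolding matvec_def by (auto simp: fun_eq_iff sum_negf)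

lemma matvec_diff: "matvec m n A (\<lambda>i. u i - v i) = (\<lambda>i. matvec m n A u i - matvec m n A v i)"
  unfolding matvec_def by (auto simp: fun_eq_iff algebra_simps sum_subtractf)

lemma transp_mat_mult: "transp (mat_mult p A B) = mat_mult p (transp B) (transp A)"
  unfolding transp_def mat_mult_def by (simp add: fun_eq_iff mult.commute)

lemma mod2_mat_mult: "mod2_mat (mat_mult p A B) = mat_mult p (mod2_mat A) (mod2_mat B)"
  unfolding mod2_mat_def mat_mult_def by (simp add: fun_eq_iff)

lemma mod2_mat_id: "mod2_mat mat_id = mat_id"
  unfolding mod2_mat_def mat_id_def by (simp add: fun_eq_iff)

lemma mat_inverses_id: "mat_inverses n mat_id mat_id"
  unfolding mat_inverses_def by (simp add: mat_mult_id_left)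

lemma mat_inverses_sym: "mat_inverses n A B \<Longrightarrow> mat_inverses n B A"
  unfolding mat_inverses_def by blast

lemma mat_mult_inverses_left:
  assumes "mat_inverses n A B" "l < n"
  shows "mat_mult n (mat_mult n A B) C l k = C l k"
proof -
  have "mat_mult n (mat_mult n A B) C l k = mat_mult n mat_id C l k"
    by (rule mat_mult_cong) (use assms in \<open>auto simp: mat_inverses_def\<close>)
  then show ?thesis using assms(2) by (simp add: mat_mult_id_left)
qed

lemma mat_inverses_mult:
  assumes "mat_inverses n A A'" "mat_inverses n B B'"
  shows "mat_inverses n (mat_mult n A B) (mat_mult n B' A')"
proof -
  have cancel: "mat_mult n (mat_mult n X Y) (mat_mult n Y' X') i k = mat_id i k"
    if "mat_inverses n X X'" "mat_inverses n Y Y'" "i < n" "k < n"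
    for X X' Y Y' :: "nat \<Rightarrow> nat \<Rightarrow> 'a" and i k
  proof -
    have "mat_mult n (mat_mult n X Y) (mat_mult n Y' X') i k
        = mat_mult n X (mat_mult n (mat_mult n Y Y') X') i k"
      by (simp add: mat_mult_assoc)
    also have "\<dots> = mat_mult n X X' i k"
      by (rule mat_mult_cong) (simp_all add: mat_mult_inverses_left that)
    finally show ?thesis using that by (simp add: mat_inverses_def)
  qed
  show ?thesis
    using cancel[OF assms] cancel[OF assms(2,1)[THEN mat_inverses_sym]] by (simp add: mat_inverses_def)
qed

lemma mat_inverses_transp: "mat_inverses n A B \<Longrightarrow> mat_inverses n (transp B) (transp A)"
  unfolding mat_inverses_def by (metis transp_mat_mult transp_def mat_id_def)

lemma matvec_cong:
  "(\<And>i l. i < m \<Longrightarrow> l < n \<Longrightarrow> A i l = A' i l) \<Longrightarrow> matvec m n A v = matvec m n A' v"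
  unfolding matvec_def by (auto intro!: sum.cong)

lemma matvec_mat_id:
  assumes "v \<in> fvec n"
  shows "matvec n n mat_id v = v"
proof -
  have "(\<Sum>l<n. mat_id i l * v l) = (\<Sum>l<n. if i = l then v l else 0)" for i
    unfolding mat_id_def by (rule sum.cong) auto
  then show ?thesis using assms by (auto simp: matvec_def fvec_def sum.delta)
qed

lemma matvec_inverses:
  assumes "mat_inverses n A B" "v \<in> fvec n"
  shows "matvec n n A (matvec n n B v) = v"
proof -
  have "matvec n n A (matvec n n B v) = matvec n n (mat_mult n A B) v"
    by (simp add: matvec_mat_mult)
  also have "\<dots> = matvec n n mat_id v"
    by (rule matvec_cong) (use assms(1) in \<open>simp add: mat_inverses_def\<close>)
  finally show ?thesis using assms(2) by (simp add: matvec_mat_id)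
qed

lemma mat_injective_mult_inverses:
  assumes "mat_injective n A" "mat_inverses n E E'"
  shows "mat_injective n (mat_mult n E A)"
  unfolding mat_injective_def
proof (intro ballI impI)
  fix x assume x: "x \<in> fvec n" and "matvec n n (mat_mult n E A) x = (\<lambda>_. 0)"
  then have "matvec n n E' (matvec n n E (matvec n n A x)) = (\<lambda>_. 0)"
    by (simp add: matvec_mat_mult)
  then have "matvec n n A x = (\<lambda>_. 0)"
    using matvec_inverses[OF mat_inverses_sym[OF assms(2)]] by simp
  then show "x = (\<lambda>_. 0)" using assms(1) x by (simp add: mat_injective_def)
qed

section \<open>Lifting invertible matrices mod 2\<close>

definition swap_mat :: "nat \<Rightarrow> nat \<Rightarrow> nat \<Rightarrow> nat \<Rightarrow> 'a::comm_ring_1"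
  where "swap_mat r k = (\<lambda>a b. if b = (id(r := k, k := r)) a then 1 else 0)"

definition transvection_mat :: "nat \<Rightarrow> (nat \<Rightarrow> 'a::comm_ring_1) \<Rightarrow> nat \<Rightarrow> nat \<Rightarrow> 'a"
  where "transvection_mat k c = (\<lambda>a b. mat_id a b + (if b = k \<and> a \<noteq> k then c a else 0))"

definition liftable_mod2 :: "nat \<Rightarrow> (nat \<Rightarrow> nat \<Rightarrow> bit) \<Rightarrow> bool"
  where "liftable_mod2 n P \<longleftrightarrow>
    (\<exists>U V. mat_inverses n U V \<and> (\<forall>i<n. \<forall>k<n. mod2_mat U i k = P i k))"

lemma mat_mult_swap_mat:
  assumes "i < n" "r < n" "k < n"
  shows "mat_mult n (swap_mat r k) A i j = A ((id(r := k, k := r)) i) j"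
proof -
  have "mat_mult n (swap_mat r k) A i j = (\<Sum>l<n. if l = (id(r := k, k := r)) i then A l j else 0)"
    unfolding mat_mult_def swap_mat_def by (rule sum.cong) auto
  then show ?thesis using assms by (simp add: sum.delta')
qed

lemma mat_mult_transvection_mat:
  assumes "i < n" "k < n"
  shows "mat_mult n (transvection_mat k c) A i j = A i j + (if i \<noteq> k then c i * A k j else 0)"
proof -
  have "mat_mult n (transvection_mat k c) A i j
    = (\<Sum>l<n. (if l = i then A l j else 0) + (if l = k then (if i \<noteq> k then c i * A k j else 0) else 0))"
    unfolding mat_mult_def transvection_mat_def mat_id_def by (rule sum.cong) (auto simp: algebra_simps)
  then show ?thesis using assms by (simp add: sum.distrib sum.delta')
qed

lemma mat_inverses_swap_mat: "r < n \<Longrightarrow> k < n \<Longrightarrow> mat_inverses n (swap_mat r k) (swap_mat r k)"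
  unfolding mat_inverses_def
  by (auto simp: mat_mult_swap_mat) (auto simp: swap_mat_def mat_id_def)

lemma mat_inverses_transvection_mat:
  "k < n \<Longrightarrow> mat_inverses n (transvection_mat k c) (transvection_mat k (\<lambda>a. - c a))"
  unfolding mat_inverses_def
  by (auto simp: mat_mult_transvection_mat) (auto simp: transvection_mat_def mat_id_def)

lemma liftable_mod2_cong:
  "liftable_mod2 n P \<Longrightarrow> (\<And>i k. i < n \<Longrightarrow> k < n \<Longrightarrow> P i k = Q i k) \<Longrightarrow> liftable_mod2 n Q"
  unfolding liftable_mod2_def by metis

lemma liftable_mod2_mult:
  assumes "liftable_mod2 n P" "liftable_mod2 n Q"
  shows "liftable_mod2 n (mat_mult n P Q)"
proof -
  obtain U V where UV: "mat_inverses n U V" "\<And>i k. i < n \<Longrightarrow> k < n \<Longrightarrow> mod2_mat U i k = P i k"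
    using assms(1) unfolding liftable_mod2_def by blast
  obtain U' V' where UV': "mat_inverses n U' V'" "\<And>i k. i < n \<Longrightarrow> k < n \<Longrightarrow> mod2_mat U' i k = Q i k"
    using assms(2) unfolding liftable_mod2_def by blast
  have "mod2_mat (mat_mult n U U') i k = mat_mult n P Q i k" if "i < n" "k < n" for i k
    unfolding mod2_mat_mult by (rule mat_mult_cong) (simp_all add: UV UV' that)
  then show ?thesis
    unfolding liftable_mod2_def using mat_inverses_mult[OF UV(1) UV'(1)] by blast
qed

lemma liftable_mod2_swap_mat:
  assumes "r < n" "k < n"
  shows "liftable_mod2 n (swap_mat r k)"
proof -
  have "mod2_mat (swap_mat r k) = swap_mat r k"
    by (simp add: mod2_mat_def swap_mat_def fun_eq_iff)
  then show ?thesis unfolding liftable_mod2_def using mat_inverses_swap_mat[OF assms] by metis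
qed

lemma liftable_mod2_transvection_mat:
  assumes "k < n"
  shows "liftable_mod2 n (transvection_mat k c)"
proof -
  let ?c = "\<lambda>a. if c a = 0 then 0 else 1 :: int"
  have "mod2_mat (transvection_mat k ?c) = transvection_mat k c"
    by (simp add: mod2_mat_def transvection_mat_def mat_id_def fun_eq_iff)
  then show ?thesis
    unfolding liftable_mod2_def using mat_inverses_transvection_mat[OF assms] by metis
qed

lemma injective_mod2_pivot:
  fixes P :: "nat \<Rightarrow> nat \<Rightarrow> bit"
  assumes inj: "mat_injective n P" and idc: "\<forall>c<k. \<forall>i<n. P i c = mat_id i c" and "k < n"
  shows "\<exists>r. k \<le> r \<and> r < n \<and> P r k = 1"
proof (rule ccontr)
  assume "\<not> ?thesis"
  then have no_pivot: "P i k = 0" if "k \<le> i" "i < n" for i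
    using that by auto
  \<comment> \<open>column \<open>k\<close> is then a sum of the unit columns \<open>0, \<dots>, k - 1\<close>: a kernel vector\<close>
  define x where "x = (\<lambda>l. if l = k then 1 else if l < k then P l k else (0::bit))"
  have "matvec n n P x i = 0" for i
  proof (cases "i < n")
    case True
    have "(\<Sum>l<n. P i l * x l)
      = (\<Sum>l<n. (if l = k then P i k else 0) + (if l = i then (if i < k then P i k else 0) else 0))"
      by (rule sum.cong) (use idc True in \<open>auto simp: x_def mat_id_def\<close>)
    also have "\<dots> = P i k + (if i < k then P i k else 0)"
      using True \<open>k < n\<close> by (simp only: sum.distrib sum.delta finite_lessThan lessThan_iff if_True)
    also have "\<dots> = 0"
      using no_pivot True by (cases "i < k") simp_all
    finally show ?thesis by (simp add: matvec_def)
  qed (simp add: matvec_def)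
  moreover have "x \<in> fvec n" using \<open>k < n\<close> by (simp add: x_def fvec_def)
  ultimately have "x = (\<lambda>_. 0)" using inj by (auto simp: mat_injective_def)
  then show False by (auto simp: x_def fun_eq_iff dest: spec[of _ k])
qed

lemma liftable_mod2_id: "liftable_mod2 n mat_id"
  unfolding liftable_mod2_def using mat_inverses_id mod2_mat_id by metis

lemma mod2_elimination_step:
  fixes P :: "nat \<Rightarrow> nat \<Rightarrow> bit"
  assumes inj: "mat_injective n P" and idc: "\<forall>c<k. \<forall>i<n. P i c = mat_id i c" and "k < n"
  obtains S T where "liftable_mod2 n S" "mat_inverses n S S" "liftable_mod2 n T" "mat_inverses n T T"
    "\<forall>c<Suc k. \<forall>i<n. mat_mult n T (mat_mult n S P) i c = mat_id i c"
proof -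
  obtain r where r: "k \<le> r" "r < n" "P r k = 1"
    using injective_mod2_pivot[OF inj idc \<open>k < n\<close>] by blast
  define S :: "nat \<Rightarrow> nat \<Rightarrow> bit" where "S = swap_mat r k"
  define P1 where "P1 = mat_mult n S P"
  define T where "T = transvection_mat k (\<lambda>a. P1 a k)"
  have P1: "P1 i j = P ((id(r := k, k := r)) i) j" if "i < n" for i j
    unfolding P1_def S_def using mat_mult_swap_mat[OF that r(2) \<open>k < n\<close>] .
  have P2: "mat_mult n T P1 i j = P1 i j + (if i \<noteq> k then P1 i k * P1 k j else 0)" if "i < n" for i j
    unfolding T_def using mat_mult_transvection_mat[OF that \<open>k < n\<close>] .
  have "P1 k k = 1" using P1[OF \<open>k < n\<close>] r(3) by simp
  have "mat_mult n T P1 i c = mat_id i c" if "c < Suc k" "i < n" for c i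
  proof (cases "c = k")
    case True
    then show ?thesis using P2[OF \<open>i < n\<close>] \<open>P1 k k = 1\<close> by (simp add: mat_id_def)
  next
    case False
    with \<open>c < Suc k\<close> have "c < k" by simp
    then have "P1 k c = 0" using P1[OF \<open>k < n\<close>] idc r by (simp add: mat_id_def)
    then have "mat_mult n T P1 i c = P ((id(r := k, k := r)) i) c"
      using P2[OF \<open>i < n\<close>] P1[OF \<open>i < n\<close>] by simp
    also have "\<dots> = mat_id i c"
      using idc \<open>c < k\<close> r \<open>i < n\<close> by (auto simp: mat_id_def)
    finally show ?thesis .
  qed
  moreover have "mat_inverses n T T"
    unfolding T_def using mat_inverses_transvection_mat[OF \<open>k < n\<close>, of "\<lambda>a. P1 a k"]
    by (simp add: uminus_bit_def)
  moreover have "liftable_mod2 n S" "mat_inverses n S S"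
    unfolding S_def using liftable_mod2_swap_mat mat_inverses_swap_mat r(2) \<open>k < n\<close> by blast+
  moreover have "liftable_mod2 n T"
    unfolding T_def using liftable_mod2_transvection_mat \<open>k < n\<close> by blast
  ultimately show ?thesis using that unfolding P1_def by blast
qed

lemma liftable_mod2_if_injective_from:
  fixes P :: "nat \<Rightarrow> nat \<Rightarrow> bit"
  assumes "k \<le> n" "mat_injective n P" "\<forall>c<k. \<forall>i<n. P i c = mat_id i c"
  shows "liftable_mod2 n P"
  using assms
proof (induction k arbitrary: P rule: inc_induct)
  case base
  then show ?case using liftable_mod2_cong[OF liftable_mod2_id] by metis
next
  case (step k)
  then have "k < n" by simp
  obtain S T where S: "liftable_mod2 n S" "mat_inverses n S S"
    and T: "liftable_mod2 n T" "mat_inverses n T T"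
    and cleared: "\<forall>c<Suc k. \<forall>i<n. mat_mult n T (mat_mult n S P) i c = mat_id i c"
    using mod2_elimination_step[OF step.prems \<open>k < n\<close>] by blast
  have "mat_injective n (mat_mult n T (mat_mult n S P))"
    by (intro mat_injective_mult_inverses[OF _ T(2)] mat_injective_mult_inverses[OF _ S(2)]
        step.prems(1))
  then have "liftable_mod2 n (mat_mult n T (mat_mult n S P))"
    using cleared by (rule step.IH)
  then have "liftable_mod2 n (mat_mult n S (mat_mult n T (mat_mult n T (mat_mult n S P))))"
    by (rule liftable_mod2_mult[OF S(1) liftable_mod2_mult[OF T(1)]])
  moreover have "mat_mult n S (mat_mult n T (mat_mult n T (mat_mult n S P))) i j = P i j"
    if "i < n" for i j
  proof -
    have "mat_mult n T (mat_mult n T (mat_mult n S P)) l j = mat_mult n S P l j" if "l < n" for l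
      using mat_mult_inverses_left[OF T(2) that] by (simp add: mat_mult_assoc)
    then have "mat_mult n S (mat_mult n T (mat_mult n T (mat_mult n S P))) i j
        = mat_mult n S (mat_mult n S P) i j"
      by (rule mat_mult_cong[OF refl]) simp
    also have "\<dots> = P i j"
      using mat_mult_inverses_left[OF S(2) \<open>i < n\<close>] by (simp add: mat_mult_assoc)
    finally show ?thesis .
  qed
  ultimately show ?case by (rule liftable_mod2_cong)
qed

lemma liftable_mod2_if_injective: "mat_injective n P \<Longrightarrow> liftable_mod2 n P"
  using liftable_mod2_if_injective_from[of 0 n P] by simp

section \<open>Homology of a conjugated standard complex\<close>

lemma Zgrp_group: "group (Zgrp n)"
proof (rule groupI)
  fix x assume "x \<in> carrier (Zgrp n)"
  then show "\<exists>y\<in>carrier (Zgrp n). y \<otimes>\<^bsub>Zgrp n\<^esub> x = \<one>\<^bsub>Zgrp n\<^esub>"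
    by (intro bexI[of _ "\<lambda>i. - x i"]) (auto simp: Zgrp_def fvec_def)
qed (auto simp: Zgrp_def fvec_def algebra_simps)

lemma group_Zgrp_vanishing:
  "group ((Zgrp n)\<lparr>carrier := {v \<in> fvec n. \<forall>l\<in>I. matvec n n A v l = 0}\<rparr>)"
  (is "group ?G")
proof (rule groupI)
  fix x assume "x \<in> carrier ?G"
  then show "\<exists>y\<in>carrier ?G. y \<otimes>\<^bsub>?G\<^esub> x = \<one>\<^bsub>?G\<^esub>"
    by (intro bexI[of _ "\<lambda>i. - x i"]) (auto simp: Zgrp_def fvec_def matvec_uminus)
qed (auto simp: Zgrp_def fvec_def matvec_add algebra_simps)

text \<open>After the change of coordinates \<open>A'\<close>, the quotient is read off from the coordinates
  \<open>e, \<dots>, e + h - 1\<close>.\<close>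

lemma Zgrp_Mod_coordinates_iso:
  fixes A A' :: "nat \<Rightarrow> nat \<Rightarrow> int"
  assumes inv: "mat_inverses n A A'" and "e + h \<le> n" and "I \<inter> {e..<e + h} = {}"
  shows "(Zgrp n)\<lparr>carrier := {v \<in> fvec n. \<forall>l\<in>I. matvec n n A' v l = 0}\<rparr>
           Mod {v \<in> fvec n. \<forall>l\<in>I \<union> {e..<e + h}. matvec n n A' v l = 0} \<cong> Zgrp h"
proof -
  define Z where "Z = {v \<in> fvec n. \<forall>l\<in>I. matvec n n A' v l = 0}"
  define G where "G = (Zgrp n)\<lparr>carrier := Z\<rparr>"
  define \<phi> where "\<phi> = (\<lambda>v i. if i < h then matvec n n A' v (e + i) else (0::int))"
  have "group G"
    unfolding G_def Z_def by (rule group_Zgrp_vanishing)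
  moreover have "\<phi> \<in> hom G (Zgrp h)"
    unfolding hom_def G_def \<phi>_def by (auto simp: Zgrp_def fvec_def matvec_add fun_eq_iff)
  ultimately interpret \<phi>: group_hom G "Zgrp h" \<phi>
    by (intro group_hom.intro group_hom_axioms.intro Zgrp_group)
  have "carrier (Zgrp h) \<subseteq> \<phi> ` carrier G"
  proof
    fix y assume y: "y \<in> carrier (Zgrp h)"
    define w where "w = (\<lambda>l. if e \<le> l \<and> l < e + h then y (l - e) else 0)"
    have "w \<in> fvec n" using \<open>e + h \<le> n\<close> by (auto simp: w_def fvec_def)
    then have A'w: "matvec n n A' (matvec n n A w) = w"
      using matvec_inverses[OF mat_inverses_sym[OF inv]] by blast
    then have "matvec n n A w \<in> carrier G"
      using \<open>I \<inter> {e..<e + h} = {}\<close> by (auto simp: G_def Z_def w_def)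
    moreover have "\<phi> (matvec n n A w) = y"
      using y unfolding \<phi>_def A'w by (auto simp: w_def Zgrp_def fvec_def fun_eq_iff)
    ultimately show "y \<in> \<phi> ` carrier G" by blast
  qed
  then have "\<phi> ` carrier G = carrier (Zgrp h)"
    using \<phi>.hom_closed by blast
  moreover have "\<phi> v = (\<lambda>_. 0) \<longleftrightarrow> (\<forall>l\<in>{e..<e + h}. matvec n n A' v l = 0)" for v
  proof
    assume "\<phi> v = (\<lambda>_. 0)"
    have vanish: "matvec n n A' v (e + i) = 0" if "i < h" for i
      using fun_cong[OF \<open>\<phi> v = (\<lambda>_. 0)\<close>, of i] that unfolding \<phi>_def by simp
    show "\<forall>l\<in>{e..<e + h}. matvec n n A' v l = 0"
    proof
      fix l assume "l \<in> {e..<e + h}"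
      then show "matvec n n A' v l = 0" using vanish[of "l - e"] by auto
    qed
  qed (auto simp: \<phi>_def fun_eq_iff)
  then have "kernel G (Zgrp h) \<phi> = {v \<in> fvec n. \<forall>l\<in>I \<union> {e..<e + h}. matvec n n A' v l = 0}"
    by (auto simp: kernel_def G_def Z_def Zgrp_def)
  ultimately show ?thesis
    using \<phi>.FactGroup_iso unfolding G_def Z_def by metis
qed

lemma cycles_mat_mult_inverses:
  assumes "mat_inverses m B B'"
  shows "cycles m n (mat_mult m B (mat_mult n S A')) = {v \<in> fvec n. matvec n n A' v \<in> cycles m n S}"
proof -
  have "matvec m m B w = (\<lambda>_. 0) \<longleftrightarrow> w = (\<lambda>_. 0)" if "w \<in> fvec m" for w
    using matvec_inverses[OF mat_inverses_sym[OF assms] that] by auto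
  then show ?thesis by (auto simp: cycles_def matvec_mat_mult)
qed

lemma boundaries_mat_mult_inverses:
  assumes "mat_inverses n A A'" "mat_inverses k C C'"
  shows "boundaries n k (mat_mult n A (mat_mult k T C')) = {v \<in> fvec n. matvec n n A' v \<in> boundaries n k T}"
proof
  show "boundaries n k (mat_mult n A (mat_mult k T C')) \<subseteq> {v \<in> fvec n. matvec n n A' v \<in> boundaries n k T}"
    using matvec_inverses[OF mat_inverses_sym[OF assms(1)]]
    by (auto simp: boundaries_def matvec_mat_mult)
  show "{v \<in> fvec n. matvec n n A' v \<in> boundaries n k T} \<subseteq> boundaries n k (mat_mult n A (mat_mult k T C'))"
  proof safe
    fix v assume "v \<in> fvec n" "matvec n n A' v \<in> boundaries n k T"
    then obtain x where "x \<in> fvec k" "matvec n n A' v = matvec n k T x"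
      by (auto simp: boundaries_def)
    then have "v = matvec n k (mat_mult n A (mat_mult k T C')) (matvec k k C x)"
      using matvec_inverses[OF assms(1) \<open>v \<in> fvec n\<close>] matvec_inverses[OF mat_inverses_sym[OF assms(2)]]
      by (simp add: matvec_mat_mult)
    then show "v \<in> boundaries n k (mat_mult n A (mat_mult k T C'))"
      by (simp add: boundaries_def)
  qed
qed

text \<open>The standard complex has \<open>d j = r j + h j + r (j - 1)\<close> basis vectors in degree \<open>j\<close>; its
  boundary maps the last \<open>r (j - 1)\<close> of them onto the first \<open>r (j - 1)\<close> basis vectors of degree
  \<open>j - 1\<close> and kills the others.\<close>

definition std_boundary :: "(int \<Rightarrow> nat) \<Rightarrow> (int \<Rightarrow> nat) \<Rightarrow> int \<Rightarrow> nat \<Rightarrow> nat \<Rightarrow> 'a::comm_ring_1"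
  where "std_boundary r h j = (\<lambda>a b. if b = r j + h j + a then 1 else 0)"

definition conjugate_complex ::
  "(int \<Rightarrow> nat) \<Rightarrow> (int \<Rightarrow> nat \<Rightarrow> nat \<Rightarrow> 'a::comm_ring_1) \<Rightarrow> (int \<Rightarrow> nat \<Rightarrow> nat \<Rightarrow> 'a)
    \<Rightarrow> (int \<Rightarrow> nat \<Rightarrow> nat \<Rightarrow> 'a) \<Rightarrow> int \<Rightarrow> nat \<Rightarrow> nat \<Rightarrow> 'a"
  where "conjugate_complex d U S V j = mat_mult (d (j - 1)) (U (j - 1)) (mat_mult (d j) (S j) (V j))"

lemma mod2_mat_std_boundary: "mod2_mat (std_boundary r h j) = std_boundary r h j"
  by (simp add: mod2_mat_def std_boundary_def fun_eq_iff)

lemma mat_mult_std_boundary: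
  "mat_mult p A (std_boundary r h j) i l
    = (if r j + h j \<le> l \<and> l - (r j + h j) < p then A i (l - (r j + h j)) else 0)"
proof -
  have "mat_mult p A (std_boundary r h j) i l
    = (\<Sum>b<p. if b = l - (r j + h j) then (if r j + h j \<le> l then A i b else 0) else 0)"
    unfolding mat_mult_def std_boundary_def by (rule sum.cong) auto
  then show ?thesis by (simp add: sum.delta)
qed

lemma is_chain_complex_iff_mat_mult:
  "is_chain_complex d D \<longleftrightarrow>
    (\<forall>j. \<forall>i < d (j - 1). \<forall>k < d (j + 1). mat_mult (d j) (D j) (D (j + 1)) i k = 0)"
  unfolding is_chain_complex_def mat_mult_def ..

lemma is_chain_complex_conjugate:
  assumes "is_chain_complex d S" and inv: "\<And>j. mat_inverses (d j) (U j) (V j)"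
  shows "is_chain_complex d (conjugate_complex d U S V)"
  unfolding is_chain_complex_iff_mat_mult
proof (intro allI impI)
  fix j i k assume "i < d (j - 1)" "k < d (j + 1)"
  let ?SS = "mat_mult (d j) (S j) (S (j + 1))"
  have "mat_mult (d j) (conjugate_complex d U S V j) (conjugate_complex d U S V (j + 1)) i k
    = mat_mult (d (j - 1)) (U (j - 1))
        (mat_mult (d j) (S j) (mat_mult (d j) (mat_mult (d j) (V j) (U j))
          (mat_mult (d (j + 1)) (S (j + 1)) (V (j + 1))))) i k"
    by (simp add: conjugate_complex_def mat_mult_assoc)
  also have "\<dots> = mat_mult (d (j - 1)) (U (j - 1))
      (mat_mult (d j) (S j) (mat_mult (d (j + 1)) (S (j + 1)) (V (j + 1)))) i k"
    by (intro mat_mult_cong refl) (simp add: mat_mult_inverses_left[OF mat_inverses_sym[OF inv]])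
  also have "\<dots> = mat_mult (d (j - 1)) (U (j - 1)) (mat_mult (d (j + 1)) ?SS (V (j + 1))) i k"
    by (simp add: mat_mult_assoc)
  also have "\<dots> = 0"
    using assms(1) unfolding is_chain_complex_iff_mat_mult by (simp add: mat_mult_def)
  finally show "mat_mult (d j) (conjugate_complex d U S V j) (conjugate_complex d U S V (j + 1)) i k
    = 0" .
qed

lemma transp_conjugate_complex:
  "transp (conjugate_complex d U S V j)
    = mat_mult (d j) (transp (V j)) (mat_mult (d (j - 1)) (transp (S j)) (transp (U (j - 1))))"
  by (simp add: conjugate_complex_def transp_mat_mult mat_mult_assoc)

context
  fixes d r h :: "int \<Rightarrow> nat"
  assumes dims: "\<And>j. d j = r j + h j + r (j - 1)"
begin

lemma matvec_std_boundary:
  "matvec (d (j - 1)) (d j) (std_boundary r h j) w a = (if a < r (j - 1) then w (r j + h j + a) else 0)"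
proof -
  have "(\<Sum>l<d j. std_boundary r h j a l * w l) = (\<Sum>l<d j. if l = r j + h j + a then w l else 0)"
    unfolding std_boundary_def by (rule sum.cong) auto
  then show ?thesis using dims[of j] dims[of "j - 1"] by (auto simp: matvec_def sum.delta)
qed

lemma matvec_transp_std_boundary:
  "matvec (d j) (d (j - 1)) (transp (std_boundary r h j)) w a
    = (if r j + h j \<le> a \<and> a < d j then w (a - (r j + h j)) else 0)"
proof -
  have "(\<Sum>l<d (j - 1). transp (std_boundary r h j) a l * w l)
    = (\<Sum>l<d (j - 1). if l = a - (r j + h j) then (if r j + h j \<le> a then w l else 0) else 0)"
    unfolding std_boundary_def transp_def by (rule sum.cong) auto
  then show ?thesis using dims[of j] dims[of "j - 1"] by (auto simp: matvec_def sum.delta)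
qed

lemma std_boundary_is_chain_complex: "is_chain_complex d (std_boundary r h)"
  unfolding is_chain_complex_def
proof (intro allI impI)
  fix j i k assume "i < d (j - 1)" "k < d (j + 1)"
  have "\<forall>l\<in>{..<d j}. std_boundary r h j i l * std_boundary r h (j + 1) l k = 0"
    using dims[of j] dims[of "j + 1"] \<open>k < d (j + 1)\<close> by (auto simp: std_boundary_def)
  then show "(\<Sum>l<d j. std_boundary r h j i l * std_boundary r h (j + 1) l k) = 0"
    by (rule sum.neutral)
qed

lemma cycles_std_boundary:
  "cycles (d (j - 1)) (d j) (std_boundary r h j) = {w \<in> fvec (d j). \<forall>l\<in>{r j + h j..}. w l = 0}"
proof -
  have "matvec (d (j - 1)) (d j) (std_boundary r h j) w = (\<lambda>_. 0) \<longleftrightarrow> (\<forall>l\<in>{r j + h j..}. w l = 0)"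
    if "w \<in> fvec (d j)" for w
  proof
    assume zero: "matvec (d (j - 1)) (d j) (std_boundary r h j) w = (\<lambda>_. 0)"
    have vanish: "w (r j + h j + a) = 0" if "a < r (j - 1)" for a
      using fun_cong[OF zero, of a] that by (simp add: matvec_std_boundary)
    show "\<forall>l\<in>{r j + h j..}. w l = 0"
    proof
      fix l assume "l \<in> {r j + h j..}"
      show "w l = 0"
      proof (cases "l < d j")
        case True
        then show ?thesis using vanish[of "l - (r j + h j)"] \<open>l \<in> {r j + h j..}\<close> dims[of j] by simp
      qed (use \<open>w \<in> fvec (d j)\<close> in \<open>simp add: fvec_def\<close>)
    qed
  qed (auto simp: matvec_std_boundary fun_eq_iff)
  then show ?thesis by (auto simp: cycles_def)
qed

lemma boundaries_std_boundary:
  "boundaries (d j) (d (j + 1)) (std_boundary r h (j + 1)) = {w \<in> fvec (d j). \<forall>l\<in>{r j..}. w l = 0}"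
  (is "?B = ?W")
proof
  show "?B \<subseteq> ?W"
    by (auto simp: boundaries_def matvec_std_boundary[of "j + 1", simplified])
  show "?W \<subseteq> ?B"
  proof
    fix w assume "w \<in> ?W"
    then have w: "w \<in> fvec (d j)" "\<forall>l\<in>{r j..}. w l = 0" by auto
    define E where "E = r (j + 1) + h (j + 1)"
    define x where "x = (\<lambda>l. if E \<le> l then w (l - E) else 0)"
    have "x \<in> fvec (d (j + 1))" using w dims[of "j + 1"] by (auto simp: x_def E_def fvec_def)
    moreover have "matvec (d j) (d (j + 1)) (std_boundary r h (j + 1)) x = w"
      using w by (auto simp: fun_eq_iff x_def E_def matvec_std_boundary[of "j + 1", simplified])
    ultimately show "w \<in> ?B"
      unfolding boundaries_def by blast
  qed
qed

lemma cycles_transp_std_boundary: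
  "cycles (d (j + 1)) (d j) (transp (std_boundary r h (j + 1)))
    = {w \<in> fvec (d j). \<forall>l\<in>{..<r j}. w l = 0}"
proof -
  have "matvec (d (j + 1)) (d j) (transp (std_boundary r h (j + 1))) w = (\<lambda>_. 0)
    \<longleftrightarrow> (\<forall>l\<in>{..<r j}. w l = 0)"
    for w
  proof
    assume zero: "matvec (d (j + 1)) (d j) (transp (std_boundary r h (j + 1))) w = (\<lambda>_. 0)"
    have vanish: "w (a - (r (j + 1) + h (j + 1))) = 0"
      if "r (j + 1) + h (j + 1) \<le> a" "a < d (j + 1)" for a
      using fun_cong[OF zero, of a] that
      by (simp add: matvec_transp_std_boundary[of "j + 1", simplified])
    show "\<forall>l\<in>{..<r j}. w l = 0"
    proof
      fix l assume "l \<in> {..<r j}"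
      then show "w l = 0" using vanish[of "r (j + 1) + h (j + 1) + l"] dims[of "j + 1"] by simp
    qed
  next
    assume "\<forall>l\<in>{..<r j}. w l = 0"
    then show "matvec (d (j + 1)) (d j) (transp (std_boundary r h (j + 1))) w = (\<lambda>_. 0)"
      unfolding fun_eq_iff matvec_transp_std_boundary[of "j + 1", simplified]
      using dims[of "j + 1"] by auto
  qed
  then show ?thesis by (auto simp: cycles_def)
qed

lemma boundaries_transp_std_boundary:
  "boundaries (d j) (d (j - 1)) (transp (std_boundary r h j))
    = {w \<in> fvec (d j). \<forall>l\<in>{..<r j + h j}. w l = 0}"
  (is "?B = ?W")
proof
  show "?B \<subseteq> ?W"
    by (auto simp: boundaries_def matvec_transp_std_boundary)
  show "?W \<subseteq> ?B"
  proof
    fix w assume "w \<in> ?W"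
    then have w: "w \<in> fvec (d j)" "\<forall>l\<in>{..<r j + h j}. w l = 0" by auto
    define x where "x = (\<lambda>l. if l < d (j - 1) then w (r j + h j + l) else 0)"
    have "x \<in> fvec (d (j - 1))" by (simp add: x_def fvec_def)
    moreover have "matvec (d j) (d (j - 1)) (transp (std_boundary r h j)) x = w"
      unfolding fun_eq_iff matvec_transp_std_boundary
      using w dims[of j] dims[of "j - 1"] by (auto simp: x_def fvec_def not_less)
    ultimately show "w \<in> ?B"
      unfolding boundaries_def by blast
  qed
qed

lemma int_homology_conjugate_std:
  assumes inv: "\<And>j. mat_inverses (d j) (U j) (V j)"
  shows "int_homology d (conjugate_complex d U (std_boundary r h) V) j \<cong> Zgrp (h j)"
proof -
  let ?L = "conjugate_complex d U (std_boundary r h) V"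
  let ?coords = "\<lambda>I. {v \<in> fvec (d j). \<forall>l\<in>I. matvec (d j) (d j) (V j) v l = 0}"
  have cycles: "cycles (d (j - 1)) (d j) (?L j) = ?coords {r j + h j..}"
    unfolding conjugate_complex_def cycles_mat_mult_inverses[OF inv] cycles_std_boundary
    by simp
  have boundaries:
    "boundaries (d j) (d (j + 1)) (?L (j + 1)) = ?coords ({r j + h j..} \<union> {r j..<r j + h j})"
  proof -
    have "{r j + h j..} \<union> {r j..<r j + h j} = {r j..}" by auto
    then show ?thesis
      by (simp add: conjugate_complex_def boundaries_mat_mult_inverses[OF inv inv]
          boundaries_std_boundary)
  qed
  show ?thesis
    unfolding int_homology_def cycles boundaries
    by (rule Zgrp_Mod_coordinates_iso[OF inv]) (use dims[of j] in auto)
qed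

lemma int_cohomology_conjugate_std:
  assumes inv: "\<And>j. mat_inverses (d j) (U j) (V j)"
  shows "int_cohomology d (conjugate_complex d U (std_boundary r h) V) j \<cong> Zgrp (h j)"
proof -
  let ?L = "conjugate_complex d U (std_boundary r h) V"
  let ?coords = "\<lambda>I. {v \<in> fvec (d j). \<forall>l\<in>I. matvec (d j) (d j) (transp (U j)) v l = 0}"
  have inv': "mat_inverses (d j) (transp (V j)) (transp (U j))" for j
    using mat_inverses_transp[OF inv] .
  have cycles: "cycles (d (j + 1)) (d j) (transp (?L (j + 1))) = ?coords {..<r j}"
    by (simp add: transp_conjugate_complex cycles_mat_mult_inverses[OF inv'] cycles_transp_std_boundary)
  have boundaries:
    "boundaries (d j) (d (j - 1)) (transp (?L j)) = ?coords ({..<r j} \<union> {r j..<r j + h j})"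
  proof -
    have "{..<r j} \<union> {r j..<r j + h j} = {..<r j + h j}" by auto
    then show ?thesis
      by (simp add: transp_conjugate_complex boundaries_mat_mult_inverses[OF inv' inv']
          boundaries_transp_std_boundary)
  qed
  show ?thesis
    unfolding int_cohomology_def cycles boundaries
    by (rule Zgrp_Mod_coordinates_iso[OF inv']) (use dims[of j] in auto)
qed

end

section \<open>Adapted bases over a field\<close>

text \<open>At type \<open>bit\<close>, \<open>F.dim\<close> is the dimension occurring in \<open>betti_F2\<close>.\<close>

interpretation F: vector_space "\<lambda>(c::'a::field) (v::nat \<Rightarrow> 'a) i. c * v i"
  by unfold_locales (auto simp: fun_eq_iff algebra_simps)

definition lincomb :: "(nat \<Rightarrow> 'a::comm_ring_1) list \<Rightarrow> (nat \<Rightarrow> 'a) \<Rightarrow> nat \<Rightarrow> 'a"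
  where "lincomb ws x = (\<lambda>i. \<Sum>l<length ws. x l * (ws ! l) i)"

definition basis_list :: "(nat \<Rightarrow> 'a::field) set \<Rightarrow> (nat \<Rightarrow> 'a) list \<Rightarrow> bool"
  where "basis_list X ws \<longleftrightarrow>
    distinct ws \<and> F.independent (set ws) \<and> set ws \<subseteq> X \<and> X \<subseteq> F.span (set ws)"

lemma sum_fun_apply: "(\<Sum>a\<in>A. f a) i = (\<Sum>a\<in>A. f a i)"
  by (induction A rule: infinite_finite_induct) auto

lemma sum_lessThan_add: "(\<Sum>l<(a::nat) + b. f l) = (\<Sum>l<a. f l) + (\<Sum>l<b. f (a + l))"
  by (induction b) (simp_all add: add_ac)

lemma lincomb_eq_sum: "lincomb ws x = (\<Sum>l<length ws. (\<lambda>i. x l * (ws ! l) i))"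
  by (simp add: lincomb_def fun_eq_iff sum_fun_apply)

lemma sum_set_distinct_list:
  assumes "distinct ws"
  shows "(\<Sum>v\<in>set ws. g v) = (\<Sum>l<length ws. g (ws ! l))"
proof -
  have "set ws = (\<lambda>l. ws ! l) ` {..<length ws}" by (auto simp: in_set_conv_nth)
  moreover have "inj_on (\<lambda>l. ws ! l) {..<length ws}"
    using assms by (simp add: inj_on_def nth_eq_iff_index_eq)
  ultimately show ?thesis by (simp add: sum.reindex)
qed

lemma lincomb_cong: "(\<And>l. l < length ws \<Longrightarrow> x l = x' l) \<Longrightarrow> lincomb ws x = lincomb ws x'"
  unfolding lincomb_def by (auto simp: fun_eq_iff intro!: sum.cong)

lemma lincomb_append:
  "lincomb (xs @ ys) x = (\<lambda>i. lincomb xs x i + lincomb ys (\<lambda>l. x (length xs + l)) i)"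
proof
  fix i
  have "lincomb (xs @ ys) x i
    = (\<Sum>l<length xs. x l * ((xs @ ys) ! l) i)
      + (\<Sum>l<length ys. x (length xs + l) * ((xs @ ys) ! (length xs + l)) i)"
    unfolding lincomb_def length_append by (rule sum_lessThan_add)
  then show "lincomb (xs @ ys) x i = lincomb xs x i + lincomb ys (\<lambda>l. x (length xs + l)) i"
    by (simp add: lincomb_def nth_append)
qed

lemma matvec_lincomb: "matvec m n M (lincomb ws x) = lincomb (map (matvec m n M) ws) x"
  unfolding matvec_def lincomb_def
  by (auto simp: fun_eq_iff sum_distrib_left sum_distrib_right mult.left_commute intro: sum.swap)

lemma lincomb_in_fvec: "set ws \<subseteq> fvec n \<Longrightarrow> lincomb ws x \<in> fvec n"
  unfolding lincomb_def fvec_def by (auto intro!: sum.neutral dest!: nth_mem)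

lemma lincomb_in_span: "lincomb ws x \<in> F.span (set ws)"
  unfolding lincomb_eq_sum
  by (intro F.span_sum F.span_scale[where c="x _", simplified] F.span_base) auto

lemma in_span_imp_lincomb:
  assumes "distinct ws" "v \<in> F.span (set ws)"
  obtains x where "v = lincomb ws x"
proof -
  obtain u where "v = (\<Sum>w\<in>set ws. (\<lambda>i. u w * w i))"
    using assms(2) F.span_finite[of "set ws"] by auto
  also have "\<dots> = lincomb ws (\<lambda>l. u (ws ! l))"
    by (simp add: lincomb_eq_sum sum_set_distinct_list[OF assms(1)])
  finally show ?thesis using that by blast
qed

lemma independent_lincomb_eq_0:
  assumes "distinct ws" "F.independent (set ws)" "lincomb ws x = (\<lambda>_. 0)" "l < length ws"
  shows "x l = 0"
proof -
  have inj: "inj_on (\<lambda>l. ws ! l) {..<length ws}"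
    using assms(1) by (simp add: inj_on_def nth_eq_iff_index_eq)
  define u where "u = (\<lambda>v. x (inv_into {..<length ws} (\<lambda>l. ws ! l) v))"
  have u: "u (ws ! l) = x l" if "l < length ws" for l
    unfolding u_def using inv_into_f_f[OF inj] that by simp
  have "(\<Sum>v\<in>set ws. (\<lambda>i. u v * v i)) = lincomb ws x"
    unfolding lincomb_eq_sum sum_set_distinct_list[OF assms(1)] by (rule sum.cong) (simp_all add: u)
  then have "(\<Sum>v\<in>set ws. (\<lambda>i. u v * v i)) = 0"
    using assms(3) by (simp add: zero_fun_def)
  then have "\<forall>v\<in>set ws. u v = 0"
    using assms(2) F.dependent_finite[of "set ws"] by auto
  then have "u (ws ! l) = 0" using assms(4) by simp
  then show ?thesis using u[OF assms(4)] by simp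
qed

lemma basis_listI:
  assumes "set ws \<subseteq> X"
    and indep: "\<And>x. lincomb ws x = (\<lambda>_. 0) \<Longrightarrow> \<forall>l<length ws. x l = 0"
    and span: "\<And>v. v \<in> X \<Longrightarrow> \<exists>x. v = lincomb ws x"
  shows "basis_list X ws"
proof -
  have "distinct ws"
  proof (rule ccontr)
    assume "\<not> distinct ws"
    then obtain a b where ab: "a < length ws" "b < length ws" "a \<noteq> b" "ws ! a = ws ! b"
      by (auto simp: distinct_conv_nth)
    define x where "x = (\<lambda>l. if l = a then 1 else if l = b then - 1 else 0 :: 'a)"
    have "lincomb ws x i = 0" for i
    proof -
      have "lincomb ws x i
        = (\<Sum>l<length ws. (if l = a then (ws ! a) i else 0) - (if l = b then (ws ! b) i else 0))"
        unfolding lincomb_def x_def by (rule sum.cong) (use ab in auto)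
      then show ?thesis using ab by (simp add: sum_subtractf sum.delta)
    qed
    then show False using indep[of x] ab(1) by (auto simp: x_def fun_eq_iff)
  qed
  moreover have "F.independent (set ws)"
    unfolding F.dependent_finite[OF finite_set]
  proof clarify
    fix u v assume v: "v \<in> set ws" "u v \<noteq> 0" and sum: "(\<Sum>v\<in>set ws. (\<lambda>i. u v * v i)) = 0"
    have "lincomb ws (\<lambda>l. u (ws ! l)) = (\<lambda>_. 0)"
      using sum by (simp add: lincomb_eq_sum sum_set_distinct_list[OF \<open>distinct ws\<close>] zero_fun_def)
    then have "\<forall>l<length ws. u (ws ! l) = 0" by (rule indep)
    then show False using v by (auto simp: in_set_conv_nth)
  qed
  moreover have "X \<subseteq> F.span (set ws)" using span lincomb_in_span by blast
  ultimately show ?thesis using assms(1) by (simp add: basis_list_def)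
qed

lemma basis_list_lincomb_eq_0:
  "basis_list X ws \<Longrightarrow> lincomb ws x = (\<lambda>_. 0) \<Longrightarrow> l < length ws \<Longrightarrow> x l = 0"
  unfolding basis_list_def using independent_lincomb_eq_0 by blast

lemma basis_list_lincomb:
  assumes "basis_list X ws" "v \<in> X"
  obtains x where "v = lincomb ws x"
  using assms in_span_imp_lincomb unfolding basis_list_def by blast

lemma dim_eq_length_basis_list: "basis_list X ws \<Longrightarrow> F.dim X = length ws"
  unfolding basis_list_def using F.basis_card_eq_dim distinct_card by metis

lemma basis_list_unit_vectors: "basis_list (fvec n) (map (\<lambda>k l. if l = k then 1 else 0) [0..<n])"
proof -
  let ?E = "map (\<lambda>k l. if l = k then 1 else 0 :: 'a) [0..<n]"
  have E: "lincomb ?E x = (\<lambda>i. if i < n then x i else 0)" for x :: "nat \<Rightarrow> 'a"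
  proof
    fix i
    have "lincomb ?E x i = (\<Sum>l<n. if l = i then x l else 0)"
      unfolding lincomb_def by (rule sum.cong) auto
    then show "lincomb ?E x i = (if i < n then x i else 0)" by (simp add: sum.delta')
  qed
  show ?thesis
  proof (rule basis_listI)
    show "set ?E \<subseteq> fvec n" by (auto simp: fvec_def)
    show "\<forall>l<length ?E. x l = 0" if "lincomb ?E x = (\<lambda>_. 0)" for x
    proof (intro allI impI)
      fix l assume "l < length ?E"
      then show "x l = 0" using fun_cong[OF that, of l] by (simp add: E)
    qed
    show "\<exists>x. v = lincomb ?E x" if "v \<in> fvec n" for v
      using that by (auto simp: E fvec_def fun_eq_iff)
  qed
qed

lemma dim_fvec: "F.dim (fvec n :: (nat \<Rightarrow> 'a::field) set) = n"
  using dim_eq_length_basis_list[OF basis_list_unit_vectors] by simp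

lemma length_basis_list_fvec: "basis_list (fvec n) ws \<Longrightarrow> length ws = n"
  using dim_eq_length_basis_list dim_fvec by metis

lemma finite_independent_in_fvec:
  assumes "F.independent B" "B \<subseteq> (fvec n :: (nat \<Rightarrow> 'a::field) set)"
  shows "finite B"
  using F.independent_span_bound[OF finite_set assms(1)] assms(2) basis_list_unit_vectors[of n]
  unfolding basis_list_def by blast

lemma basis_list_extend:
  assumes "X \<subseteq> fvec n" "distinct xs" "F.independent (set xs)" "set xs \<subseteq> X"
  obtains ys where "basis_list X (xs @ ys)"
proof -
  obtain B where B: "set xs \<subseteq> B" "B \<subseteq> X" "F.independent B" "X \<subseteq> F.span B"
    using F.maximal_independent_subset_extend[OF assms(4,3)] by blast
  have "finite B" using finite_independent_in_fvec[OF B(3)] B(2) assms(1) by blast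
  then obtain ys where "set ys = B - set xs" "distinct ys"
    using finite_distinct_list[of "B - set xs"] by auto
  then have "basis_list X (xs @ ys)" using B assms(2) by (auto simp: basis_list_def Un_absorb1)
  then show ?thesis by (rule that)
qed

lemma basis_list_exists:
  assumes "X \<subseteq> fvec n"
  obtains ws where "basis_list X ws"
  using basis_list_extend[OF assms, of "[]"] F.independent_empty by auto

lemma lincomb_zero_coeffs [simp]: "lincomb ws (\<lambda>_. 0) = (\<lambda>_. 0)"
  by (simp add: lincomb_def)

lemma boundaries_subset_cycles:
  assumes "is_chain_complex d D"
  shows "boundaries (d j) (d (j + 1)) (D (j + 1)) \<subseteq> cycles (d (j - 1)) (d j) (D j)"
proof
  fix v assume "v \<in> boundaries (d j) (d (j + 1)) (D (j + 1))"
  then obtain u where u: "u \<in> fvec (d (j + 1))" "v = matvec (d j) (d (j + 1)) (D (j + 1)) u"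
    unfolding boundaries_def by auto
  have "matvec (d (j - 1)) (d j) (D j) v
      = matvec (d (j - 1)) (d (j + 1)) (mat_mult (d j) (D j) (D (j + 1))) u"
    by (simp add: u matvec_mat_mult)
  also have "\<dots> = (\<lambda>_. 0)"
    using assms unfolding is_chain_complex_iff_mat_mult by (simp add: matvec_def fun_eq_iff)
  finally show "v \<in> cycles (d (j - 1)) (d j) (D j)" using u by (simp add: cycles_def)
qed

lemma basis_list_cycles_append_preimages:
  fixes M :: "nat \<Rightarrow> nat \<Rightarrow> 'a::field"
  assumes zs: "basis_list (cycles m n M) zs" and bs: "basis_list (boundaries m n M) bs"
    and cs: "set cs \<subseteq> fvec n" "map (matvec m n M) cs = bs"
  shows "basis_list (fvec n) (zs @ cs)"
proof (rule basis_listI)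
  have zs_cycles: "set zs \<subseteq> cycles m n M" using zs by (simp add: basis_list_def)
  then show "set (zs @ cs) \<subseteq> fvec n" using cs(1) by (auto simp: cycles_def)
  have "matvec m n M (zs ! l) = (\<lambda>_. 0)" if "l < length zs" for l
    using zs_cycles nth_mem[OF that] by (auto simp: cycles_def)
  then have M_zs: "matvec m n M (lincomb zs x) = (\<lambda>_. 0)" for x
    unfolding matvec_lincomb by (auto simp: lincomb_def intro!: sum.neutral)
  have M_cs: "matvec m n M (lincomb cs y) = lincomb bs y" for y
    by (simp add: matvec_lincomb cs(2))
  have "length cs = length bs" using cs(2) by auto
  show "\<forall>l<length (zs @ cs). x l = 0" if x: "lincomb (zs @ cs) x = (\<lambda>_. 0)" for x
  proof -
    define y where "y = (\<lambda>l. x (length zs + l))"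
    have sum: "(\<lambda>i. lincomb zs x i + lincomb cs y i) = (\<lambda>_. 0)"
      using x unfolding lincomb_append y_def .
    have "lincomb bs y = (\<lambda>_. 0)"
      using arg_cong[OF sum, of "matvec m n M"] by (simp add: matvec_add M_zs M_cs)
    then have y0: "y l = 0" if "l < length cs" for l
      using basis_list_lincomb_eq_0[OF bs] that \<open>length cs = length bs\<close> by simp
    then have "lincomb cs y = (\<lambda>_. 0)"
      using lincomb_cong[of cs y "\<lambda>_. 0"] by simp
    then have "lincomb zs x = (\<lambda>_. 0)" using sum by (simp add: fun_eq_iff)
    then have "x l = 0" if "l < length zs" for l
      using basis_list_lincomb_eq_0[OF zs] that by simp
    then show ?thesis using y0 unfolding y_def
      by (metis add_diff_inverse_nat length_append nat_add_left_cancel_less)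
  qed
  show "\<exists>x. v = lincomb (zs @ cs) x" if v: "v \<in> fvec n" for v
  proof -
    have "matvec m n M v \<in> boundaries m n M" using v by (simp add: boundaries_def)
    then obtain y where y: "matvec m n M v = lincomb bs y" using basis_list_lincomb[OF bs] by blast
    define v' where "v' = (\<lambda>i. v i - lincomb cs y i)"
    have "v' \<in> fvec n" using v lincomb_in_fvec[OF cs(1)] by (auto simp: v'_def fvec_def)
    moreover have "matvec m n M v' = (\<lambda>_. 0)" by (simp add: v'_def matvec_diff M_cs y)
    ultimately obtain x where x: "v' = lincomb zs x"
      using basis_list_lincomb[OF zs] by (auto simp: cycles_def)
    define x' where "x' = (\<lambda>l. if l < length zs then x l else y (l - length zs))"
    have "lincomb (zs @ cs) x' = (\<lambda>i. lincomb zs x i + lincomb cs y i)"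
      unfolding lincomb_append using lincomb_cong[of zs x' x] by (simp add: x'_def)
    also have "\<dots> = v" by (simp add: x[symmetric] v'_def)
    finally show ?thesis by metis
  qed
qed

definition cols_mat :: "(nat \<Rightarrow> 'a::zero) list \<Rightarrow> nat \<Rightarrow> nat \<Rightarrow> 'a"
  where "cols_mat ws = (\<lambda>i l. if l < length ws then (ws ! l) i else 0)"

lemma matvec_cols_mat: "set ws \<subseteq> fvec m \<Longrightarrow> matvec m (length ws) (cols_mat ws) x = lincomb ws x"
  using lincomb_in_fvec[of ws m x]
  by (auto simp: matvec_def lincomb_def cols_mat_def fvec_def fun_eq_iff mult.commute intro!: sum.cong)

lemma mat_mult_cols_mat: "l < length ws \<Longrightarrow> mat_mult n A (cols_mat ws) i l = (\<Sum>k<n. A i k * (ws ! l) k)"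
  by (simp add: mat_mult_def cols_mat_def)

lemma mat_injective_cols_mat:
  assumes "basis_list (fvec n) ws"
  shows "mat_injective n (cols_mat ws)"
  unfolding mat_injective_def
proof (intro ballI impI)
  fix x assume "x \<in> fvec n" "matvec n n (cols_mat ws) x = (\<lambda>_. 0)"
  moreover have "set ws \<subseteq> fvec n" "length ws = n"
    using assms length_basis_list_fvec by (auto simp: basis_list_def)
  ultimately have "lincomb ws x = (\<lambda>_. 0)" using matvec_cols_mat[of ws n x] by simp
  then have "x l = 0" if "l < n" for l
    using basis_list_lincomb_eq_0[OF assms] that \<open>length ws = n\<close> by simp
  then show "x = (\<lambda>_. 0)" using \<open>x \<in> fvec n\<close> by (auto simp: fvec_def not_less[symmetric])
qed

lemma boundaries_preimage_list:
  assumes "set ws \<subseteq> boundaries m n M"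
  obtains cs where "set cs \<subseteq> fvec n" "map (matvec m n M) cs = ws"
  using assms
proof (induction ws arbitrary: thesis)
  case (Cons w ws)
  obtain cs where "set cs \<subseteq> fvec n" "map (matvec m n M) cs = ws" using Cons by auto
  moreover obtain c where "c \<in> fvec n" "matvec m n M c = w"
    using Cons.prems(2) by (auto simp: boundaries_def)
  ultimately show ?case using Cons.prems(1)[of "c # cs"] by simp
qed simp

lemma adapted_basis_lists:
  fixes D :: "int \<Rightarrow> nat \<Rightarrow> nat \<Rightarrow> 'a::field"
  assumes "is_chain_complex d D"
  obtains bs hs cs where "\<And>j. basis_list (boundaries (d j) (d (j + 1)) (D (j + 1))) (bs j)"
    and "\<And>j. basis_list (cycles (d (j - 1)) (d j) (D j)) (bs j @ hs j)"
    and "\<And>j. set (cs j) \<subseteq> fvec (d j)"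
    and "\<And>j. map (matvec (d (j - 1)) (d j) (D j)) (cs j) = bs (j - 1)"
proof -
  define Z where "Z j = cycles (d (j - 1)) (d j) (D j)" for j
  define B where "B j = boundaries (d j) (d (j + 1)) (D (j + 1))" for j
  have "\<exists>ws. basis_list (B j) ws" for j
  proof -
    have "B j \<subseteq> fvec (d j)" by (auto simp: B_def boundaries_def)
    then show ?thesis by (rule basis_list_exists) blast
  qed
  then obtain bs where bs: "\<And>j. basis_list (B j) (bs j)" by metis
  have "\<exists>ws. basis_list (Z j) (bs j @ ws)" for j
  proof -
    have "set (bs j) \<subseteq> Z j"
      using bs[of j] boundaries_subset_cycles[OF assms] by (auto simp: basis_list_def B_def Z_def)
    moreover have "Z j \<subseteq> fvec (d j)" by (auto simp: Z_def cycles_def)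
    moreover have "distinct (bs j)" "F.independent (set (bs j))"
      using bs[of j] by (simp_all add: basis_list_def)
    ultimately obtain ys where "basis_list (Z j) (bs j @ ys)" using basis_list_extend by metis
    then show ?thesis ..
  qed
  then obtain hs where hs: "\<And>j. basis_list (Z j) (bs j @ hs j)" by metis
  have "\<exists>cs. set cs \<subseteq> fvec (d j) \<and> map (matvec (d (j - 1)) (d j) (D j)) cs = bs (j - 1)" for j
  proof -
    have "set (bs (j - 1)) \<subseteq> boundaries (d (j - 1)) (d j) (D j)"
      using bs[of "j - 1"] by (simp add: basis_list_def B_def)
    then obtain cs where "set cs \<subseteq> fvec (d j)" "map (matvec (d (j - 1)) (d j) (D j)) cs = bs (j - 1)"
      by (rule boundaries_preimage_list)
    then show ?thesis by blast
  qed
  then obtain cs where "\<And>j. set (cs j) \<subseteq> fvec (d j)"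
    "\<And>j. map (matvec (d (j - 1)) (d j) (D j)) (cs j) = bs (j - 1)" by metis
  with bs hs show ?thesis using that unfolding B_def Z_def by blast
qed

lemma mat_mult_cols_mat_adapted:
  assumes dims: "\<And>j. d j = r j + h j + r (j - 1)"
    and lengths: "length (w j) = d j" "length (w (j - 1)) = d (j - 1)"
    and cycles: "\<And>l. l < r j + h j \<Longrightarrow> w j ! l \<in> cycles (d (j - 1)) (d j) (D j)"
    and preimages: "\<And>t. t < r (j - 1) \<Longrightarrow>
      matvec (d (j - 1)) (d j) (D j) (w j ! (r j + h j + t)) = w (j - 1) ! t"
    and "i < d (j - 1)" "l < d j"
  shows "mat_mult (d j) (D j) (cols_mat (w j)) i l
    = mat_mult (d (j - 1)) (cols_mat (w (j - 1))) (std_boundary r h j) i l"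
proof -
  have "mat_mult (d j) (D j) (cols_mat (w j)) i l = matvec (d (j - 1)) (d j) (D j) (w j ! l) i"
    using lengths(1) \<open>i < d (j - 1)\<close> \<open>l < d j\<close> by (simp add: mat_mult_cols_mat matvec_def)
  also have "\<dots> = mat_mult (d (j - 1)) (cols_mat (w (j - 1))) (std_boundary r h j) i l"
  proof (cases "l < r j + h j")
    case True
    then show ?thesis using cycles[OF True] by (simp add: cycles_def mat_mult_std_boundary)
  next
    case False
    define t where "t = l - (r j + h j)"
    have "t < r (j - 1)" "l = r j + h j + t" using False \<open>l < d j\<close> dims[of j] by (simp_all add: t_def)
    moreover have "t < d (j - 1)" "t < length (w (j - 1))"
      using \<open>t < r (j - 1)\<close> dims[of "j - 1"] lengths(2) by simp_all
    ultimately show ?thesis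
      using preimages by (simp add: mat_mult_std_boundary cols_mat_def)
  qed
  finally show ?thesis .
qed

lemma adapted_basis_change:
  fixes D :: "int \<Rightarrow> nat \<Rightarrow> nat \<Rightarrow> 'a::field"
  assumes "is_chain_complex d D"
  obtains r h :: "int \<Rightarrow> nat" and P :: "int \<Rightarrow> nat \<Rightarrow> nat \<Rightarrow> 'a"
  where "\<And>j. d j = r j + h j + r (j - 1)"
    and "\<And>j. mat_injective (d j) (P j)"
    and "\<And>j. h j = F.dim (cycles (d (j - 1)) (d j) (D j))
                  - F.dim (boundaries (d j) (d (j + 1)) (D (j + 1)))"
    and "\<And>j i l. i < d (j - 1) \<Longrightarrow> l < d j \<Longrightarrow>
           mat_mult (d j) (D j) (P j) i l = mat_mult (d (j - 1)) (P (j - 1)) (std_boundary r h j) i l"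
proof -
  obtain bs hs cs where bs: "\<And>j. basis_list (boundaries (d j) (d (j + 1)) (D (j + 1))) (bs j)"
    and hs: "\<And>j. basis_list (cycles (d (j - 1)) (d j) (D j)) (bs j @ hs j)"
    and cs: "\<And>j. set (cs j) \<subseteq> fvec (d j)" "\<And>j. map (matvec (d (j - 1)) (d j) (D j)) (cs j) = bs (j - 1)"
    using adapted_basis_lists[OF assms] by blast
  define r where "r j = length (bs j)" for j
  define h where "h j = length (hs j)" for j
  define w where "w j = (bs j @ hs j) @ cs j" for j
  have basis: "basis_list (fvec (d j)) (w j)" for j
    unfolding w_def using basis_list_cycles_append_preimages[OF hs _ cs] bs[of "j - 1"] by simp
  then have length_w: "length (w j) = d j" for j by (rule length_basis_list_fvec)
  have length_cs: "length (cs j) = r (j - 1)" for j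
    using arg_cong[OF cs(2), of length] by (simp add: r_def)
  have dims: "d j = r j + h j + r (j - 1)" for j
    using length_w[of j] length_cs[of j] by (simp add: w_def r_def h_def)
  show ?thesis
  proof (rule that)
    show "d j = r j + h j + r (j - 1)" for j by (rule dims)
    show "mat_injective (d j) (cols_mat (w j))" for j
      using mat_injective_cols_mat[OF basis] .
    show "h j = F.dim (cycles (d (j - 1)) (d j) (D j))
               - F.dim (boundaries (d j) (d (j + 1)) (D (j + 1)))" for j
      using dim_eq_length_basis_list[OF hs] dim_eq_length_basis_list[OF bs] by (simp add: r_def h_def)
    show "mat_mult (d j) (D j) (cols_mat (w j)) i l
        = mat_mult (d (j - 1)) (cols_mat (w (j - 1))) (std_boundary r h j) i l"
      if "i < d (j - 1)" "l < d j" for j i l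
    proof (rule mat_mult_cols_mat_adapted[where r = r and h = h, OF dims length_w length_w _ _ that])
      show "w j ! l \<in> cycles (d (j - 1)) (d j) (D j)" if "l < r j + h j" for l
        using hs[of j] that by (auto simp: w_def nth_append r_def h_def basis_list_def)
      show "matvec (d (j - 1)) (d j) (D j) (w j ! (r j + h j + t)) = w (j - 1) ! t"
        if "t < r (j - 1)" for t
        using arg_cong[OF cs(2)[of j], of "\<lambda>xs. xs ! t"] that length_cs[of j]
        by (simp add: w_def nth_append r_def h_def)
    qed
  qed
qed

section \<open>The lift\<close>

lemma mod2_conjugate_complex:
  fixes D :: "int \<Rightarrow> nat \<Rightarrow> nat \<Rightarrow> bit" and S U V :: "int \<Rightarrow> nat \<Rightarrow> nat \<Rightarrow> int"
  assumes rel: "\<And>j i l. i < d (j - 1) \<Longrightarrow> l < d j \<Longrightarrow>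
      mat_mult (d j) (D j) (P j) i l = mat_mult (d (j - 1)) (P (j - 1)) (mod2_mat (S j)) i l"
    and inv: "\<And>j. mat_inverses (d j) (U j) (V j)"
    and lift: "\<And>j i k. i < d j \<Longrightarrow> k < d j \<Longrightarrow> mod2_mat (U j) i k = P j i k"
    and "i < d (j - 1)" "k < d j"
  shows "of_int (conjugate_complex d U S V j i k) = D j i k"
proof -
  have P_inverse: "mat_mult (d j) (P j) (mod2_mat (V j)) l k = mat_id l k" if "l < d j" "k < d j" for l k
  proof -
    have "mat_mult (d j) (P j) (mod2_mat (V j)) l k = mod2_mat (mat_mult (d j) (U j) (V j)) l k"
      unfolding mod2_mat_mult by (rule mat_mult_cong) (simp_all add: lift that)
    also have "\<dots> = mat_id l k"
      using inv[of j] that by (simp add: mat_inverses_def mod2_mat_def mat_id_def)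
    finally show ?thesis .
  qed
  have "of_int (conjugate_complex d U S V j i k) = mod2_mat (conjugate_complex d U S V j) i k"
    by (simp add: mod2_mat_def)
  also have "\<dots> = mat_mult (d (j - 1)) (mod2_mat (U (j - 1)))
      (mat_mult (d j) (mod2_mat (S j)) (mod2_mat (V j))) i k"
    by (simp only: conjugate_complex_def mod2_mat_mult)
  also have "\<dots> = mat_mult (d (j - 1)) (P (j - 1)) (mat_mult (d j) (mod2_mat (S j)) (mod2_mat (V j))) i k"
    by (rule mat_mult_cong) (simp_all add: lift \<open>i < d (j - 1)\<close>)
  also have "\<dots> = mat_mult (d j) (mat_mult (d j) (D j) (P j)) (mod2_mat (V j)) i k"
    by (simp add: mat_mult_assoc[symmetric]) (rule mat_mult_cong, simp_all add: rel \<open>i < d (j - 1)\<close>)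
  also have "\<dots> = mat_mult (d j) (D j) mat_id i k"
    by (simp add: mat_mult_assoc) (rule mat_mult_cong, simp_all add: P_inverse \<open>k < d j\<close>)
  also have "\<dots> = D j i k" using \<open>k < d j\<close> by (rule mat_mult_id_right)
  finally show ?thesis .
qed

theorem mainTheorem8:
  fixes d :: "int \<Rightarrow> nat" and D :: "int \<Rightarrow> nat \<Rightarrow> nat \<Rightarrow> bit"
  assumes "is_chain_complex d D"
  shows "\<exists>L. is_lift d D L \<and>
           (\<forall>j. int_homology d L j \<cong> Zgrp (betti_F2 d D j) \<and>
                int_cohomology d L j \<cong> Zgrp (betti_F2 d D j))"
proof -
  obtain r h P where dims: "\<And>j. d j = r j + h j + r (j - 1)"
    and inj: "\<And>j. mat_injective (d j) (P j)"
    and betti: "\<And>j. h j = betti_F2 d D j"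
    and rel: "\<And>j i l. i < d (j - 1) \<Longrightarrow> l < d j \<Longrightarrow>
      mat_mult (d j) (D j) (P j) i l = mat_mult (d (j - 1)) (P (j - 1)) (std_boundary r h j) i l"
    using adapted_basis_change[OF assms, folded betti_F2_def] by blast
  obtain U V where inv: "\<And>j. mat_inverses (d j) (U j) (V j)"
    and lift: "\<And>j i k. i < d j \<Longrightarrow> k < d j \<Longrightarrow> mod2_mat (U j) i k = P j i k"
    using liftable_mod2_if_injective[OF inj] unfolding liftable_mod2_def by metis
  define L where "L = conjugate_complex d U (std_boundary r h) V"
  have "is_lift d D L"
    unfolding is_lift_def L_def
    using mod2_conjugate_complex[where S = "std_boundary r h",
        OF rel[folded mod2_mat_std_boundary] inv lift]
      is_chain_complex_conjugate[OF std_boundary_is_chain_complex[of d r h, OF dims] inv] by blast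
  moreover have "int_homology d L j \<cong> Zgrp (betti_F2 d D j)"
    and "int_cohomology d L j \<cong> Zgrp (betti_F2 d D j)" for j
    unfolding L_def betti[symmetric]
    using int_homology_conjugate_std[of d r h, OF dims inv]
      int_cohomology_conjugate_std[of d r h, OF dims inv] by blast+
  ultimately show ?thesis by blast
qed

end
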